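(* Let $d_1>d_2>1$ and $f\ge0$ be integers, let $n=d_1+d_2+f$, and let $\beta\in\mathcal S_n$ have cycle structure $d_1\cdot d_2\cdot1^f$ (one $d_1$-cycle, one $d_2$-cycle, $f$ fixed points). Then $(\varepsilon,\beta,\beta;(12))\in\mathrm{Par}(n)$ if and only if $d_1/d_2$ is an odd integer and $f=0$.
   Context: A Latin square of order $n$ is an $n\times n$ array with rows, columns and symbols indexed by $[n]$, each symbol occurring once in each row and each column, with triple set $O(L)$. Permutations act on the right; $\varepsilon$ is the identity. A paratopism $(\alpha,\beta,\gamma;(12))$ maps $L$ to $L^\sigma$ with triple set $\{(y\beta,x\alpha,z\gamma):(x,y,z)\in O(L)\}$; it is an autoparatopism of $L$ if $L^\sigma=L$. $\mathrm{Par}(n)$ is the set of paratopisms that are autoparatopisms of at least one Latin square of order $n$. *)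

theory Defs
  imports "HOL-Combinatorics.Orbits" "HOL-Combinatorics.Permutations"
begin

definition latin_square :: "nat \<Rightarrow> (nat \<times> nat \<times> nat) set \<Rightarrow> bool" where
  "latin_square n L \<longleftrightarrow>
     L \<subseteq> {1..n} \<times> {1..n} \<times> {1..n} \<and>
     (\<forall>x\<in>{1..n}. \<forall>y\<in>{1..n}. \<exists>!z. (x, y, z) \<in> L) \<and>
     (\<forall>x\<in>{1..n}. \<forall>z\<in>{1..n}. \<exists>!y. (x, y, z) \<in> L) \<and>
     (\<forall>y\<in>{1..n}. \<forall>z\<in>{1..n}. \<exists>!x. (x, y, z) \<in> L)"

definition paratopism12_image ::
  "(nat \<Rightarrow> nat) \<Rightarrow> (nat \<Rightarrow> nat) \<Rightarrow> (nat \<Rightarrow> nat) \<Rightarrow> (nat \<times> nat \<times> nat) set \<Rightarrow> (nat \<times> nat \<times> nat) set" where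
  "paratopism12_image \<alpha> \<beta> \<gamma> L = {(\<beta> y, \<alpha> x, \<gamma> z) | x y z. (x, y, z) \<in> L}"

definition autoparatopism12 ::
  "nat \<Rightarrow> (nat \<Rightarrow> nat) \<Rightarrow> (nat \<Rightarrow> nat) \<Rightarrow> (nat \<Rightarrow> nat) \<Rightarrow> (nat \<times> nat \<times> nat) set \<Rightarrow> bool" where
  "autoparatopism12 n \<alpha> \<beta> \<gamma> L \<longleftrightarrow>
     \<alpha> permutes {1..n} \<and> \<beta> permutes {1..n} \<and> \<gamma> permutes {1..n} \<and>
     paratopism12_image \<alpha> \<beta> \<gamma> L = L"

definition in_Par12 :: "nat \<Rightarrow> (nat \<Rightarrow> nat) \<Rightarrow> (nat \<Rightarrow> nat) \<Rightarrow> (nat \<Rightarrow> nat) \<Rightarrow> bool" where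
  "in_Par12 n \<alpha> \<beta> \<gamma> \<longleftrightarrow> (\<exists>L. latin_square n L \<and> autoparatopism12 n \<alpha> \<beta> \<gamma> L)"

definition cycle_structure_2 :: "nat \<Rightarrow> (nat \<Rightarrow> nat) \<Rightarrow> nat \<Rightarrow> nat \<Rightarrow> nat \<Rightarrow> bool" where
  "cycle_structure_2 n \<beta> d1 d2 f \<longleftrightarrow>
     \<beta> permutes {1..n} \<and>
     (\<exists>A B. A \<subseteq> {1..n} \<and> B \<subseteq> {1..n} \<and> A \<inter> B = {} \<and>
        card A = d1 \<and> card B = d2 \<and> cyclic_on \<beta> A \<and> cyclic_on \<beta> B \<and>
        card ({1..n} - (A \<union> B)) = f \<and>
        (\<forall>x\<in>{1..n} - (A \<union> B). \<beta> x = x))"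

end

theory Submission
  imports Defs "HOL-Library.Disjoint_Sets" "HOL-Library.Z2"
begin

text \<open>Let \<open>A\<close> and \<open>B\<close> be the cycles of \<open>\<beta>\<close> and \<open>F\<close> its fixed points. If \<open>L\<close> admits the
  autoparatopism \<open>\<sigma> = (\<epsilon>, \<beta>, \<beta>; (12))\<close>, then \<open>\<sigma>\<^sup>2\<close> is the autotopism \<open>(\<beta>, \<beta>, \<beta>\<^sup>2)\<close>; if
  \<open>\<beta>\<^sup>k\<close> fixes a row, that row maps the symbols fixed by \<open>\<beta>\<^sup>2\<^sup>k\<close> injectively to columns fixed by
  \<open>\<beta>\<^sup>k\<close>. Counting fixed points for \<open>k = d1\<close> and \<open>k = d1/2\<close> gives \<open>d2 | d1\<close> with odd quotient,
  and, if \<open>F \<noteq> {}\<close>, that \<open>d1 = 2h + 1\<close> is odd. Then \<open>(x, y, z) \<mapsto> (\<beta>\<^sup>h\<^sup>+\<^sup>1 y, \<beta>\<^sup>h x, \<beta>\<^sup>d\<^sup>1 z)\<close>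
  is an involution of the \<open>d1 |T|\<close> triples with row in \<open>A\<close> and symbol in \<open>T\<close>, for \<open>T = B\<close> and
  for \<open>T = {x\<^sub>0}\<close> with \<open>x\<^sub>0 \<in> F\<close>. Both counts are odd, so both sets contain a symbol of a cell
  \<open>(x, \<beta>\<^sup>h x)\<close>; but the symbols in these cells form a single orbit of \<open>\<beta>\<^sup>2\<close>, which cannot
  meet both \<open>B\<close> and \<open>F\<close>.

  Conversely, for \<open>d1 = q d2\<close> with \<open>q\<close> odd and no fixed points, an explicit table on
  \<open>\<int>\<^sub>d\<^sub>1 \<union> \<int>\<^sub>d\<^sub>2\<close> satisfying \<open>M (v + 1) u = M u v + 1\<close> is a Latin square admitting \<open>\<sigma>\<close>.\<close>

lemma cyclic_on_conv_funpow_dist1: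
  assumes "permutation f" "cyclic_on f A" "x \<in> A"
  shows "card A = funpow_dist1 f x x"
    and "A = (\<lambda>i. (f ^^ i) x) ` {0..<funpow_dist1 f x x}"
    and "inj_on (\<lambda>i. (f ^^ i) x) {0..<funpow_dist1 f x x}"
proof -
  have x_orbit: "x \<in> orbit f x"
    using assms(1) by (rule permutation_self_in_orbit)
  show A: "A = (\<lambda>i. (f ^^ i) x) ` {0..<funpow_dist1 f x x}"
    using assms(2,3) orbit_conv_funpow_dist1[OF x_orbit] by (simp add: cyclic_on_alldef)
  show inj: "inj_on (\<lambda>i. (f ^^ i) x) {0..<funpow_dist1 f x x}"
    using inj_on_funpow_dist1[OF x_orbit] .
  show "card A = funpow_dist1 f x x"
    by (subst A) (simp add: card_image[OF inj])
qed

lemma bij_betw_funpow_cyclic_on: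
  assumes "permutation f" "cyclic_on f A" "x \<in> A"
  shows "bij_betw (\<lambda>i. (f ^^ i) x) {0..<card A} A"
  using cyclic_on_conv_funpow_dist1[OF assms] by (simp add: bij_betw_def)

lemma cyclic_on_funpow_eq_self_iff:
  assumes "permutation f" "cyclic_on f A" "x \<in> A"
  shows "(f ^^ k) x = x \<longleftrightarrow> card A dvd k"
proof -
  note dist = cyclic_on_conv_funpow_dist1[OF assms]
  have x_orbit: "x \<in> orbit f x"
    using assms(1) by (rule permutation_self_in_orbit)
  have period: "(f ^^ card A) x = x"
    using funpow_dist1_prop[OF x_orbit] dist(1) by simp
  have "card A > 0"
    using dist(1) by simp
  show ?thesis
  proof
    assume "(f ^^ k) x = x"
    then have "(f ^^ (k mod card A)) x = (f ^^ 0) x"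
      using funpow_mod_eq[OF period, of k] by simp
    moreover have "k mod card A < card A"
      using \<open>card A > 0\<close> by simp
    ultimately have "k mod card A = 0"
      using dist(1,3) \<open>card A > 0\<close> unfolding inj_on_def by fastforce
    then show "card A dvd k" by auto
  next
    assume "card A dvd k"
    then show "(f ^^ k) x = x"
      using funpow_mod_eq[OF period, of k] by simp
  qed
qed

lemma involution_has_fixpoint_if_odd_card:
  assumes "finite X" "odd (card X)"
    and "\<And>x. x \<in> X \<Longrightarrow> h x \<in> X" "\<And>x. x \<in> X \<Longrightarrow> h (h x) = x"
  shows "\<exists>x\<in>X. h x = x"
proof (rule ccontr)
  assume "\<not> ?thesis"
  \<comment> \<open>count modulo 2: a fixpoint-free involution splits \<open>X\<close> into pairs\<close>
  then have "(\<Sum>x\<in>X. 1 :: bit) = 0"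
    using assms by (intro sum_involution_eq_0[where h = h]) auto
  then have "even (of_nat (card X) :: bit)" by simp
  with assms(2) show False by (simp only: even_of_nat_iff)
qed

lemma zdvd_abs_less_imp_zero:
  fixes m x :: int
  assumes "m dvd x" "\<bar>x\<bar> < m"
  shows "x = 0"
proof (rule ccontr)
  assume "x \<noteq> 0"
  then have "\<bar>m\<bar> \<le> \<bar>x\<bar>"
    using assms(1) by (rule dvd_imp_le_int)
  with assms(2) show False
    using abs_ge_self[of m] by linarith
qed

lemma int_eq_if_mod_eq:
  fixes a b m :: int
  assumes "a mod m = b mod m" "\<bar>a - b\<bar> < m"
  shows "a = b"
  using zdvd_abs_less_imp_zero[of m "a - b"] assms by (simp add: mod_eq_dvd_iff)

lemma dvd_if_dvd_double_odd:
  fixes d q x :: int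
  assumes "odd q" "d * q dvd 2 * x" "d dvd x"
  shows "d * q dvd x"
proof -
  obtain y where x: "x = d * y"
    using assms(3) by blast
  have "d = 0 \<or> q dvd 2 * y"
    using assms(2) unfolding x by (simp add: mult.left_commute)
  moreover have "coprime q 2"
    using assms(1) by simp
  ultimately show ?thesis
    unfolding x by (auto simp: coprime_dvd_mult_right_iff)
qed

lemma latin_square_triple_range:
  assumes "latin_square n L" "(x, y, z) \<in> L"
  shows "x \<in> {1..n} \<and> y \<in> {1..n} \<and> z \<in> {1..n}"
proof -
  have "L \<subseteq> {1..n} \<times> {1..n} \<times> {1..n}"
    using assms(1) unfolding latin_square_def by (elim conjE)
  with assms(2) show ?thesis by blast
qed

lemma latin_square_symbol_unique:
  assumes "latin_square n L" "(x, y, z) \<in> L" "(x, y, z') \<in> L"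
  shows "z = z'"
proof -
  have "x \<in> {1..n}" "y \<in> {1..n}"
    using latin_square_triple_range[OF assms(1,2)] by auto
  then have "\<exists>!z. (x, y, z) \<in> L"
    using assms(1) unfolding latin_square_def by (elim conjE) simp
  with assms(2,3) show ?thesis by (metis ex1E)
qed

lemma latin_square_column_exists:
  assumes "latin_square n L" "x \<in> {1..n}" "z \<in> {1..n}"
  shows "\<exists>y. (x, y, z) \<in> L"
proof -
  have "\<exists>!y. (x, y, z) \<in> L"
    using assms unfolding latin_square_def by (elim conjE) simp
  then show ?thesis by blast
qed

lemma latin_square_column_unique:
  assumes "latin_square n L" "(x, y, z) \<in> L" "(x, y', z) \<in> L"
  shows "y = y'"
proof -
  have "x \<in> {1..n}" "z \<in> {1..n}"
    using latin_square_triple_range[OF assms(1,2)] by auto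
  then have "\<exists>!y. (x, y, z) \<in> L"
    using assms(1) unfolding latin_square_def by (elim conjE) simp
  with assms(2,3) show ?thesis by (metis ex1E)
qed

lemma latin_square_row_unique:
  assumes "latin_square n L" "(x, y, z) \<in> L" "(x', y, z) \<in> L"
  shows "x = x'"
proof -
  have "y \<in> {1..n}" "z \<in> {1..n}"
    using latin_square_triple_range[OF assms(1,2)] by auto
  then have "\<exists>!x. (x, y, z) \<in> L"
    using assms(1) unfolding latin_square_def by (elim conjE) simp
  with assms(2,3) show ?thesis by (metis ex1E)
qed

section \<open>Fixed points of autoparatopisms\<close>

locale latin_autoparatopism =
  fixes n :: nat and \<beta> :: "nat \<Rightarrow> nat" and L :: "(nat \<times> nat \<times> nat) set"
  assumes latin: "latin_square n L"
    and autoparatopism: "autoparatopism12 n id \<beta> \<beta> L"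
begin

lemma autoparatopism_step: "(x, y, z) \<in> L \<Longrightarrow> (\<beta> y, x, \<beta> z) \<in> L"
  using autoparatopism unfolding autoparatopism12_def paratopism12_image_def by force

lemma funpow_triple: "(x, y, z) \<in> L \<Longrightarrow> ((\<beta> ^^ k) x, (\<beta> ^^ k) y, (\<beta> ^^ (2 * k)) z) \<in> L"
proof (induction k)
  case (Suc k)
  then have "((\<beta> ^^ k) x, (\<beta> ^^ k) y, (\<beta> ^^ (2 * k)) z) \<in> L"
    by simp
  then have "(\<beta> ((\<beta> ^^ k) y), (\<beta> ^^ k) x, \<beta> ((\<beta> ^^ (2 * k)) z)) \<in> L"
    by (rule autoparatopism_step)
  then have "(\<beta> ((\<beta> ^^ k) x), \<beta> ((\<beta> ^^ k) y), \<beta> (\<beta> ((\<beta> ^^ (2 * k)) z))) \<in> L"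
    by (rule autoparatopism_step)
  then show ?case by simp
qed simp

lemma swap_funpow_triple:
  "(x, y, z) \<in> L \<Longrightarrow> ((\<beta> ^^ Suc k) y, (\<beta> ^^ k) x, (\<beta> ^^ Suc (2 * k)) z) \<in> L"
  using autoparatopism_step[OF funpow_triple, of x y z k] by simp

text \<open>The column of row \<open>x\<close> holding a symbol fixed by \<open>\<beta>\<^sup>2\<^sup>k\<close> is fixed by \<open>\<beta>\<^sup>k\<close>.\<close>
lemma card_fixpoints_double_le:
  assumes "x \<in> {1..n}" "(\<beta> ^^ k) x = x"
  shows "card {z \<in> {1..n}. (\<beta> ^^ (2 * k)) z = z} \<le> card {y \<in> {1..n}. (\<beta> ^^ k) y = y}"
proof (rule card_le_if_inj_on_rel[where r = "\<lambda>z y. (x, y, z) \<in> L"])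
  fix z assume z: "z \<in> {z \<in> {1..n}. (\<beta> ^^ (2 * k)) z = z}"
  then obtain y where xyz: "(x, y, z) \<in> L"
    using latin_square_column_exists[OF latin assms(1)] by blast
  then have "(x, (\<beta> ^^ k) y, z) \<in> L"
    using funpow_triple[OF xyz, of k] assms(2) z by simp
  then have "y = (\<beta> ^^ k) y"
    by (rule latin_square_column_unique[OF latin xyz])
  with xyz show "\<exists>y. y \<in> {y \<in> {1..n}. (\<beta> ^^ k) y = y} \<and> (x, y, z) \<in> L"
    using latin_square_triple_range[OF latin xyz] by auto
next
  fix z z' y assume "(x, y, z) \<in> L" "(x, y, z') \<in> L"
  then show "z = z'"
    by (rule latin_square_symbol_unique[OF latin])
qed simp

end

locale two_cycle_permutation =
  fixes n :: nat and \<beta> :: "nat \<Rightarrow> nat" and d1 d2 :: nat and A B :: "nat set"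
  assumes permutes: "\<beta> permutes {1..n}"
    and A_subset: "A \<subseteq> {1..n}" and B_subset: "B \<subseteq> {1..n}" and disjoint: "A \<inter> B = {}"
    and card_A: "card A = d1" and card_B: "card B = d2"
    and cyclic_A: "cyclic_on \<beta> A" and cyclic_B: "cyclic_on \<beta> B"
    and fixes_rest: "\<forall>x\<in>{1..n} - (A \<union> B). \<beta> x = x"
begin

definition F :: "nat set" where "F = {1..n} - (A \<union> B)"

lemma permutation: "permutation \<beta>"
  using permutes by (rule permutes_imp_permutation[rotated]) simp

lemma funpow_fixes_A_iff: "x \<in> A \<Longrightarrow> (\<beta> ^^ k) x = x \<longleftrightarrow> d1 dvd k"
  using cyclic_on_funpow_eq_self_iff[OF permutation cyclic_A] card_A by blast

lemma funpow_fixes_B_iff: "x \<in> B \<Longrightarrow> (\<beta> ^^ k) x = x \<longleftrightarrow> d2 dvd k"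
  using cyclic_on_funpow_eq_self_iff[OF permutation cyclic_B] card_B by blast

lemma funpow_fixes_F: "x \<in> F \<Longrightarrow> (\<beta> ^^ k) x = x"
  using fixes_rest unfolding F_def by (induction k) auto

lemma funpow_in_A: "x \<in> A \<Longrightarrow> (\<beta> ^^ k) x \<in> A"
  using cyclic_A by (rule cyclic_on_funpow_in)

lemma funpow_in_B: "x \<in> B \<Longrightarrow> (\<beta> ^^ k) x \<in> B"
  using cyclic_B by (rule cyclic_on_funpow_in)

lemma A_nonempty: "A \<noteq> {}" and B_nonempty: "B \<noteq> {}"
  using cyclic_A cyclic_B unfolding cyclic_on_def by auto

lemma d1_pos: "0 < d1"
  using A_nonempty finite_subset[OF A_subset] unfolding card_A[symmetric]
  by (simp add: card_gt_0_iff)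

lemma d2_pos: "0 < d2"
  using B_nonempty finite_subset[OF B_subset] unfolding card_B[symmetric]
  by (simp add: card_gt_0_iff)

lemma card_fixpoints:
  "card {y \<in> {1..n}. (\<beta> ^^ k) y = y}
     = (if d1 dvd k then d1 else 0) + (if d2 dvd k then d2 else 0) + card F"
proof -
  let ?A = "if d1 dvd k then A else {}" and ?B = "if d2 dvd k then B else {}"
  have "{y \<in> {1..n}. (\<beta> ^^ k) y = y} = ?A \<union> ?B \<union> F"
  proof (rule set_eqI)
    fix y
    consider "y \<in> A" | "y \<in> B" | "y \<in> F" | "y \<notin> {1..n}"
      unfolding F_def by blast
    then show "y \<in> {y \<in> {1..n}. (\<beta> ^^ k) y = y} \<longleftrightarrow> y \<in> ?A \<union> ?B \<union> F"
      by cases (use funpow_fixes_A_iff funpow_fixes_B_iff funpow_fixes_F A_subset B_subset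
          disjoint in \<open>auto simp: F_def\<close>)
  qed
  moreover have "finite A" "finite B" "finite F"
    using A_subset B_subset unfolding F_def by (auto intro: finite_subset)
  moreover have "A \<inter> F = {}" "B \<inter> F = {}" "(A \<union> B) \<inter> F = {}"
    unfolding F_def by auto
  ultimately show ?thesis
    using disjoint card_A card_B by (simp add: card_Un_disjoint)
qed

end

locale two_cycle_autoparatopism =
  two_cycle_permutation n \<beta> d1 d2 A B + latin_autoparatopism n \<beta> L
  for n \<beta> d1 d2 A B L +
  assumes d2_less_d1: "d2 < d1"
begin

lemma funpow_fixes_outside_A: "x \<in> {1..n} - A \<Longrightarrow> d2 dvd k \<Longrightarrow> (\<beta> ^^ k) x = x"
  using funpow_fixes_B_iff funpow_fixes_F unfolding F_def by blast

lemma fixpoint_count_double_le: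
  assumes "x \<in> {1..n}" "(\<beta> ^^ k) x = x"
  shows "(if d1 dvd 2 * k then d1 else 0) + (if d2 dvd 2 * k then d2 else 0)
           \<le> (if d1 dvd k then d1 else 0) + (if d2 dvd k then d2 else 0)"
  using card_fixpoints_double_le[OF assms] unfolding card_fixpoints by simp

text \<open>Otherwise \<open>\<beta>\<^sup>d\<^sup>2\<close> would fix the column and the symbol, hence the row \<open>x\<close>.\<close>
lemma column_in_A:
  assumes "x \<in> A" "(x, y, z) \<in> L" "z \<notin> A"
  shows "y \<in> A"
proof (rule ccontr)
  assume "y \<notin> A"
  then have "y \<in> {1..n} - A" "z \<in> {1..n} - A"
    using latin_square_triple_range[OF latin assms(2)] assms(3) by auto
  then have "(\<beta> ^^ d2) y = y" "(\<beta> ^^ (2 * d2)) z = z"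
    by (auto intro: funpow_fixes_outside_A)
  then have "((\<beta> ^^ d2) x, y, z) \<in> L"
    using funpow_triple[OF assms(2), of d2] by simp
  then have "(\<beta> ^^ d2) x = x"
    using latin_square_row_unique[OF latin] assms(2) by blast
  then have "d1 dvd d2"
    using funpow_fixes_A_iff[OF assms(1)] by simp
  then show False
    using nat_dvd_not_less[OF d2_pos d2_less_d1] by blast
qed

lemma d2_dvd_double_d1: "d2 dvd 2 * d1"
proof -
  obtain a b where a: "a \<in> A" and b: "b \<in> B"
    using A_nonempty B_nonempty by blast
  then have "a \<in> {1..n}" "b \<in> {1..n}"
    using A_subset B_subset by auto
  then obtain y where ayb: "(a, y, b) \<in> L"
    using latin_square_column_exists[OF latin] by blast
  have "b \<notin> A"
    using b disjoint by blast
  then have "y \<in> A"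
    using column_in_A[OF a ayb] by blast
  then have "(\<beta> ^^ d1) a = a" "(\<beta> ^^ d1) y = y"
    using funpow_fixes_A_iff a by simp_all
  then have "(a, y, (\<beta> ^^ (2 * d1)) b) \<in> L"
    using funpow_triple[OF ayb, of d1] by simp
  then have "b = (\<beta> ^^ (2 * d1)) b"
    by (rule latin_square_symbol_unique[OF latin ayb])
  then show ?thesis
    using funpow_fixes_B_iff[OF b] by metis
qed

lemma d2_dvd_d1: "d2 dvd d1"
proof -
  obtain a where "a \<in> A"
    using A_nonempty by blast
  then show ?thesis
    using fixpoint_count_double_le[of a d1] funpow_fixes_A_iff A_subset d2_dvd_double_d1
    by (auto split: if_splits)
qed

lemma odd_d1_div_d2: "odd (d1 div d2)"
proof
  assume "even (d1 div d2)"
  then obtain k where k: "d1 = 2 * k" "d2 dvd k"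
    using d2_dvd_d1 by (metis dvd_div_mult_self dvd_triv_right evenE mult.assoc mult.commute)
  obtain b where "b \<in> B"
    using B_nonempty by blast
  moreover have "\<not> d1 dvd k"
    using k d1_pos by (auto dest: dvd_imp_le)
  ultimately show False
    using fixpoint_count_double_le[of b k] funpow_fixes_B_iff B_subset k by auto
qed

lemma odd_d1_if_fixpoint: "F \<noteq> {} \<Longrightarrow> odd d1"
proof
  assume "F \<noteq> {}" "even d1"
  then obtain x k where "x \<in> F" "d1 = 2 * k"
    by blast
  moreover have "\<not> d1 dvd k"
    using \<open>d1 = 2 * k\<close> d1_pos by (auto dest: dvd_imp_le)
  ultimately show False
    using fixpoint_count_double_le[of x k] funpow_fixes_F d2_dvd_d1 unfolding F_def
    by (auto split: if_splits)
qed

lemma card_triples_with_row_in_A: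
  assumes "T \<subseteq> {1..n} - A"
  shows "card {(x, y, z) \<in> L. x \<in> A \<and> z \<in> T} = d1 * card T"
proof -
  let ?S = "{(x, y, z) \<in> L. x \<in> A \<and> z \<in> T}"
  have "bij_betw (\<lambda>(x, y, z). (x, z)) ?S (A \<times> T)"
  proof (rule bij_betwI')
    fix t t' assume "t \<in> ?S" "t' \<in> ?S"
    then show "((\<lambda>(x, y, z). (x, z)) t = (\<lambda>(x, y, z). (x, z)) t') = (t = t')"
      using latin_square_column_unique[OF latin] by auto
  next
    fix p assume "p \<in> A \<times> T"
    then obtain x z where xz: "p = (x, z)" "x \<in> A" "z \<in> T"
      by blast
    then obtain y where "(x, y, z) \<in> L"
      using latin_square_column_exists[OF latin] A_subset assms by blast
    with xz show "\<exists>t\<in>?S. p = (\<lambda>(x, y, z). (x, z)) t"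
      by force
  qed auto
  then have "card ?S = card A * card T"
    by (simp add: bij_betw_same_card card_cartesian_product)
  then show ?thesis
    using card_A by simp
qed

text \<open>For odd \<open>d1 = 2h + 1\<close>, the map \<open>(x, y, z) \<mapsto> (\<beta>\<^sup>h\<^sup>+\<^sup>1 y, \<beta>\<^sup>h x, \<beta>\<^sup>d\<^sup>1 z)\<close> is an
  involution on the triples with row in \<open>A\<close> and symbol in \<open>T\<close>; there is an odd number of them,
  so it has a fixed point, and its fixed points lie on the diagonal \<open>y = \<beta>\<^sup>h x\<close>.\<close>
lemma diagonal_symbol_exists:
  assumes "odd d1" "T \<subseteq> {1..n} - A" "\<And>z. z \<in> T \<Longrightarrow> (\<beta> ^^ d1) z \<in> T" "odd (card T)"
  shows "\<exists>x\<in>A. \<exists>z\<in>T. (x, (\<beta> ^^ (d1 div 2)) x, z) \<in> L"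
proof -
  define h where "h = d1 div 2"
  have d1: "d1 = Suc (2 * h)"
    using assms(1) unfolding h_def by simp
  have funpow_funpow: "(\<beta> ^^ m) ((\<beta> ^^ k) x) = (\<beta> ^^ (m + k)) x" for m k x
    by (simp add: funpow_add)
  define S where "S = {(x, y, z) \<in> L. x \<in> A \<and> z \<in> T}"
  define \<theta> where "\<theta> = (\<lambda>(x, y, z). ((\<beta> ^^ Suc h) y, (\<beta> ^^ h) x, (\<beta> ^^ d1) z))"
  have "\<theta> t \<in> S \<and> \<theta> (\<theta> t) = t" if "t \<in> S" for t
  proof -
    obtain x y z where t: "t = (x, y, z)" "(x, y, z) \<in> L" "x \<in> A" "z \<in> T"
      using \<open>t \<in> S\<close> unfolding S_def by auto
    have "z \<in> {1..n} - A"
      using t(4) assms(2) by blast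
    then have "y \<in> A" "(\<beta> ^^ (2 * d1)) z = z"
      using column_in_A[OF t(3,2)] funpow_fixes_outside_A d2_dvd_d1 by auto
    moreover have "(\<beta> ^^ d1) x = x" "(\<beta> ^^ d1) y = y"
      using funpow_fixes_A_iff t(3) \<open>y \<in> A\<close> by simp_all
    moreover have "Suc h + h = d1" "h + Suc h = d1" "d1 + d1 = 2 * d1"
      using d1 by simp_all
    ultimately have "\<theta> (\<theta> t) = t"
      unfolding \<theta>_def t(1) by (simp only: case_prod_conv funpow_funpow)
    moreover have "\<theta> t \<in> S"
    proof -
      have "(\<beta> ^^ Suc h) y \<in> A" "(\<beta> ^^ h) x \<in> A" "(\<beta> ^^ d1) z \<in> T"
        using funpow_in_A \<open>y \<in> A\<close> t(3,4) assms(3) by blast+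
      then show ?thesis
        using swap_funpow_triple[OF t(2), of h] unfolding \<theta>_def S_def t(1) d1 by simp
    qed
    ultimately show ?thesis by blast
  qed
  moreover have "finite S"
    using latin unfolding S_def latin_square_def by (auto intro: finite_subset)
  moreover have "odd (card S)"
    using card_triples_with_row_in_A[OF assms(2)] assms(1,4) unfolding S_def by simp
  ultimately obtain t where "t \<in> S" "\<theta> t = t"
    using involution_has_fixpoint_if_odd_card by metis
  moreover obtain x y z where "t = (x, y, z)"
    using prod_cases3 by blast
  ultimately have "(x, y, z) \<in> L" "x \<in> A" "z \<in> T" "y = (\<beta> ^^ h) x"
    unfolding S_def \<theta>_def by auto
  then show ?thesis
    unfolding h_def by blast
qed

lemma no_fixpoints: "F = {}"
proof (rule ccontr)
  assume "F \<noteq> {}"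
  then obtain x0 where x0: "x0 \<in> F"
    by blast
  let ?h = "d1 div 2"
  have "odd d1"
    using odd_d1_if_fixpoint \<open>F \<noteq> {}\<close> .
  then have "odd d2"
    using d2_dvd_d1 dvd_trans by blast
  then obtain x1 z1 where x1: "x1 \<in> A" "z1 \<in> B" "(x1, (\<beta> ^^ ?h) x1, z1) \<in> L"
    using diagonal_symbol_exists[of B] \<open>odd d1\<close> B_subset disjoint funpow_in_B card_B by blast
  obtain x2 where x2: "x2 \<in> A" "(x2, (\<beta> ^^ ?h) x2, x0) \<in> L"
    using diagonal_symbol_exists[of "{x0}"] \<open>odd d1\<close> x0 funpow_fixes_F unfolding F_def by auto
  obtain j where j: "x2 = (\<beta> ^^ j) x1"
  proof -
    have "x2 \<in> orbit \<beta> x1"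
      using cyclic_A x1(1) x2(1) unfolding cyclic_on_alldef by blast
    then show ?thesis
      using that orbit_altdef_permutation[OF permutation] by auto
  qed
  have "(\<beta> ^^ j) ((\<beta> ^^ ?h) x1) = (\<beta> ^^ ?h) x2"
    unfolding j by (metis add.commute comp_apply funpow_add)
  then have "(x2, (\<beta> ^^ ?h) x2, (\<beta> ^^ (2 * j)) z1) \<in> L"
    using funpow_triple[OF x1(3), of j] j by simp
  then have "x0 = (\<beta> ^^ (2 * j)) z1"
    by (rule latin_square_symbol_unique[OF latin x2(2)])
  then have "x0 \<in> B"
    using funpow_in_B[OF x1(2)] by simp
  then show False
    using x0 unfolding F_def by blast
qed

end

section \<open>Latin squares from shift-symmetric tables\<close>

lemma mem_table_image_iff:
  fixes E :: "'i \<Rightarrow> nat" and M :: "'i \<Rightarrow> 'i \<Rightarrow> 'i"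
  assumes E: "bij_betw E I {1..n}"
    and closed: "\<And>u v. u \<in> I \<Longrightarrow> v \<in> I \<Longrightarrow> M u v \<in> I"
  shows "(x, y, z) \<in> {(E u, E v, E (M u v)) | u v. u \<in> I \<and> v \<in> I} \<longleftrightarrow>
    x \<in> {1..n} \<and> y \<in> {1..n} \<and> z \<in> {1..n} \<and>
    M (the_inv_into I E x) (the_inv_into I E y) = the_inv_into I E z"
proof -
  have "the_inv_into I E x \<in> I" and "E (the_inv_into I E x) = x" if "x \<in> {1..n}" for x
    using that E by (auto simp: bij_betw_def the_inv_into_into f_the_inv_into_f)
  moreover have "the_inv_into I E (E u) = u" and "E u \<in> {1..n}" if "u \<in> I" for u
    using that E by (auto simp: bij_betw_def the_inv_into_f_f)
  ultimately show ?thesis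
    using closed by (smt (verit) mem_Collect_eq prod.inject)
qed

lemma latin_square_of_table:
  fixes E :: "'i \<Rightarrow> nat" and M :: "'i \<Rightarrow> 'i \<Rightarrow> 'i"
  assumes E: "bij_betw E I {1..n}"
    and closed: "\<And>u v. u \<in> I \<Longrightarrow> v \<in> I \<Longrightarrow> M u v \<in> I"
    and inj_row: "\<And>u. u \<in> I \<Longrightarrow> inj_on (M u) I"
    and inj_column: "\<And>v. v \<in> I \<Longrightarrow> inj_on (\<lambda>u. M u v) I"
  shows "latin_square n {(E u, E v, E (M u v)) | u v. u \<in> I \<and> v \<in> I}"
proof -
  let ?L = "{(E u, E v, E (M u v)) | u v. u \<in> I \<and> v \<in> I}"
  let ?E' = "the_inv_into I E"
  have "finite I"
    using E bij_betw_finite by blast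
  have E'_in: "?E' x \<in> I" and E_E': "E (?E' x) = x" if "x \<in> {1..n}" for x
    using that E by (auto simp: bij_betw_def the_inv_into_into f_the_inv_into_f)
  have E'_E: "?E' (E u) = u" and E_in: "E u \<in> {1..n}" if "u \<in> I" for u
    using that E by (auto simp: bij_betw_def the_inv_into_f_f)
  have row_onto: "M u ` I = I" and column_onto: "(\<lambda>v. M v u) ` I = I" if "u \<in> I" for u
    using that closed by (intro endo_inj_surj \<open>finite I\<close> inj_row inj_column; blast)+
  have mem: "(x, y, z) \<in> ?L \<longleftrightarrow>
      x \<in> {1..n} \<and> y \<in> {1..n} \<and> z \<in> {1..n} \<and> M (?E' x) (?E' y) = ?E' z" for x y z
    using E closed by (rule mem_table_image_iff)
  show ?thesis
    unfolding latin_square_def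
  proof (intro conjI ballI)
    show "?L \<subseteq> {1..n} \<times> {1..n} \<times> {1..n}"
      using E_in closed by blast
  next
    fix x y assume "x \<in> {1..n}" "y \<in> {1..n}"
    then show "\<exists>!z. (x, y, z) \<in> ?L"
      using mem E'_in E_E' E'_E E_in closed by (intro ex1I[of _ "E (M (?E' x) (?E' y))"]) auto
  next
    fix x z assume x: "x \<in> {1..n}" and z: "z \<in> {1..n}"
    have "?E' z \<in> M (?E' x) ` I"
      using row_onto E'_in x z by simp
    then obtain v where v: "v \<in> I" "M (?E' x) v = ?E' z"
      by auto
    show "\<exists>!y. (x, y, z) \<in> ?L"
    proof (rule ex1I[of _ "E v"])
      show "(x, E v, z) \<in> ?L"
        unfolding mem using x z v E_in E'_E by simp
    next
      fix y assume "(x, y, z) \<in> ?L"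
      then have "y \<in> {1..n}" "M (?E' x) (?E' y) = M (?E' x) v"
        unfolding mem using v by auto
      then show "y = E v"
        using inj_onD[OF inj_row[OF E'_in[OF x]]] E'_in v(1) E_E' by metis
    qed
  next
    fix y z assume y: "y \<in> {1..n}" and z: "z \<in> {1..n}"
    have "?E' z \<in> (\<lambda>u. M u (?E' y)) ` I"
      using column_onto E'_in y z by simp
    then obtain u where u: "u \<in> I" "M u (?E' y) = ?E' z"
      by auto
    show "\<exists>!x. (x, y, z) \<in> ?L"
    proof (rule ex1I[of _ "E u"])
      show "(E u, y, z) \<in> ?L"
        unfolding mem using y z u E_in E'_E by simp
    next
      fix x assume "(x, y, z) \<in> ?L"
      then have "x \<in> {1..n}" "M (?E' x) (?E' y) = M u (?E' y)"
        unfolding mem using u by auto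
      then show "x = E u"
        using inj_onD[OF inj_column[OF E'_in[OF y]]] E'_in u(1) E_E' by metis
    qed
  qed
qed

lemma paratopism12_image_of_table:
  fixes E :: "'i \<Rightarrow> nat" and M :: "'i \<Rightarrow> 'i \<Rightarrow> 'i"
  assumes shift_onto: "s ` I = I"
    and E_shift: "\<And>u. u \<in> I \<Longrightarrow> E (s u) = \<beta> (E u)"
    and closed: "\<And>u v. u \<in> I \<Longrightarrow> v \<in> I \<Longrightarrow> M u v \<in> I"
    and shift_symmetric: "\<And>u v. u \<in> I \<Longrightarrow> v \<in> I \<Longrightarrow> M (s v) u = s (M u v)"
  shows "paratopism12_image id \<beta> \<beta> {(E u, E v, E (M u v)) | u v. u \<in> I \<and> v \<in> I}
           = {(E u, E v, E (M u v)) | u v. u \<in> I \<and> v \<in> I}"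
    (is "paratopism12_image id \<beta> \<beta> ?L = ?L")
proof (rule set_eqI)
  fix t
  show "t \<in> paratopism12_image id \<beta> \<beta> ?L \<longleftrightarrow> t \<in> ?L"
  proof
    assume "t \<in> paratopism12_image id \<beta> \<beta> ?L"
    then obtain x y z where "t = (\<beta> y, x, \<beta> z)" "(x, y, z) \<in> ?L"
      unfolding paratopism12_image_def id_apply by blast
    then obtain u v where "u \<in> I" "v \<in> I" "t = (\<beta> (E v), E u, \<beta> (E (M u v)))"
      by blast
    moreover have "s v \<in> I"
      using shift_onto \<open>v \<in> I\<close> by blast
    ultimately have "t = (E (s v), E u, E (M (s v) u))"
      using E_shift closed shift_symmetric by simp
    with \<open>s v \<in> I\<close> \<open>u \<in> I\<close> show "t \<in> ?L"
      by blast
  next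
    assume "t \<in> ?L"
    then obtain u v where "u \<in> I" "v \<in> I" "t = (E u, E v, E (M u v))"
      by blast
    moreover obtain w where "w \<in> I" "u = s w"
      using shift_onto \<open>u \<in> I\<close> by blast
    ultimately have "t = (\<beta> (E w), id (E v), \<beta> (E (M v w)))"
      using E_shift closed shift_symmetric by simp
    then show "t \<in> paratopism12_image id \<beta> \<beta> ?L"
      unfolding paratopism12_image_def using \<open>v \<in> I\<close> \<open>w \<in> I\<close> by blast
  qed
qed

text \<open>The shift identity \<open>M (s v) u = s (M u v)\<close> says that column \<open>v\<close> of the table is
  row \<open>s v\<close> followed by \<open>s\<^sup>-\<^sup>1\<close>, so injective rows give injective columns.\<close>
lemma in_Par12_of_table:
  fixes E :: "'i \<Rightarrow> nat" and M :: "'i \<Rightarrow> 'i \<Rightarrow> 'i"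
  assumes "\<beta> permutes {1..n}" and E: "bij_betw E I {1..n}"
    and shift_onto: "s ` I = I"
    and E_shift: "\<And>u. u \<in> I \<Longrightarrow> E (s u) = \<beta> (E u)"
    and closed: "\<And>u v. u \<in> I \<Longrightarrow> v \<in> I \<Longrightarrow> M u v \<in> I"
    and shift_symmetric: "\<And>u v. u \<in> I \<Longrightarrow> v \<in> I \<Longrightarrow> M (s v) u = s (M u v)"
    and inj_row: "\<And>u. u \<in> I \<Longrightarrow> inj_on (M u) I"
  shows "in_Par12 n id \<beta> \<beta>"
proof -
  have inj_column: "inj_on (\<lambda>u. M u v) I" if "v \<in> I" for v
  proof -
    have "inj_on (M (s v)) I"
      using inj_row shift_onto that by blast
    then have "inj_on (s \<circ> (\<lambda>u. M u v)) I"
      using shift_symmetric that by (simp add: inj_on_def)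
    then show ?thesis
      by (rule inj_on_imageI2)
  qed
  have "latin_square n {(E u, E v, E (M u v)) | u v. u \<in> I \<and> v \<in> I}"
    using E closed inj_row inj_column by (rule latin_square_of_table)
  moreover have "paratopism12_image id \<beta> \<beta> {(E u, E v, E (M u v)) | u v. u \<in> I \<and> v \<in> I}
      = {(E u, E v, E (M u v)) | u v. u \<in> I \<and> v \<in> I}"
    using shift_onto E_shift closed shift_symmetric by (rule paratopism12_image_of_table)
  ultimately show ?thesis
    unfolding in_Par12_def autoparatopism12_def using \<open>\<beta> permutes {1..n}\<close> permutes_id by blast
qed

section \<open>The construction for an odd quotient\<close>

locale two_cycle_table =
  fixes d q :: int
  assumes d_pos: "0 < d" and q_pos: "0 < q" and odd_q: "odd q"
begin

definition D :: int where "D = d * q"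

definition h :: int where "h = (D - d) div 2"

lemma D_eq: "D = 2 * h + d"
proof -
  have "D - d = d * (q - 1)"
    unfolding D_def by (simp add: algebra_simps)
  moreover have "even (q - 1)"
    using odd_q by simp
  ultimately show ?thesis
    unfolding h_def by simp
qed

lemma d_le_D: "d \<le> D"
  using d_pos q_pos unfolding D_def by simp

lemma h_nonneg: "0 \<le> h"
  using D_eq d_le_D by simp

lemma d_dvd_D: "d dvd D"
  unfolding D_def by simp

text \<open>\<open>(True, i)\<close> stands for \<open>\<beta>\<^sup>i a\<close> on the cycle of length \<open>D\<close>, \<open>(False, j)\<close> for \<open>\<beta>\<^sup>j b\<close> on
  the cycle of length \<open>d\<close>, and \<open>shift\<close> for \<open>\<beta>\<close>. As invariance forces
  \<open>table (shift u) (shift v) = shift (shift (table u v))\<close>, row \<open>(True, i)\<close> is row \<open>(True, 0)\<close>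
  moved by \<open>i\<close> columns and \<open>2i\<close> symbols. Row \<open>(True, 0)\<close> meets the short cycle exactly in
  the columns \<open>(True, k)\<close> with \<open>h \<le> k < h + d\<close>; this band of diagonals \<open>k - i\<close> is preserved by
  \<open>c \<mapsto> -1 - c\<close>, the action of \<open>(i, k) \<mapsto> (k + 1, i)\<close> on diagonals.\<close>
definition I :: "(bool \<times> int) set" where
  "I = {True} \<times> {0..<D} \<union> {False} \<times> {0..<d}"

definition shift :: "bool \<times> int \<Rightarrow> bool \<times> int" where
  "shift u = (if fst u then (True, (snd u + 1) mod D) else (False, (snd u + 1) mod d))"

definition MAA :: "int \<Rightarrow> int \<Rightarrow> bool \<times> int" where
  "MAA i k = (if h \<le> (k - i) mod D \<and> (k - i) mod D < h + d then (False, (i + k) mod d)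
              else (True, (i + k + h + 1) mod D))"

definition MAB :: "int \<Rightarrow> int \<Rightarrow> bool \<times> int" where
  "MAB i j = (True, (2 * i - (i - j) mod d) mod D)"

definition MBA :: "int \<Rightarrow> int \<Rightarrow> bool \<times> int" where
  "MBA j i = (True, (2 * i + 1 - (i + 1 - j) mod d) mod D)"

definition MBB :: "int \<Rightarrow> int \<Rightarrow> bool \<times> int" where
  "MBB j j' = (False, (j + j') mod d)"

definition table :: "bool \<times> int \<Rightarrow> bool \<times> int \<Rightarrow> bool \<times> int" where
  "table u v = (if fst u then (if fst v then MAA (snd u) (snd v) else MAB (snd u) (snd v))
                else (if fst v then MBA (snd u) (snd v) else MBB (snd u) (snd v)))"

lemma mem_I: "u \<in> I \<longleftrightarrow> 0 \<le> snd u \<and> snd u < (if fst u then D else d)"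
  unfolding I_def by (cases u) auto

lemma table_closed: "u \<in> I \<Longrightarrow> v \<in> I \<Longrightarrow> table u v \<in> I"
  using d_pos d_le_D
  unfolding mem_I table_def MAA_def MAB_def MBA_def MBB_def by auto

lemma shift_onto: "shift ` I = I"
proof
  show "shift ` I \<subseteq> I"
    using d_pos d_le_D unfolding shift_def by (auto simp: mem_I)
  show "I \<subseteq> shift ` I"
  proof
    fix u assume "u \<in> I"
    moreover obtain b i where "u = (b, i)"
      by fastforce
    ultimately have "u = shift (b, (i - 1) mod (if b then D else d))"
      "(b, (i - 1) mod (if b then D else d)) \<in> I"
      using d_pos d_le_D unfolding shift_def by (auto simp: mem_I mod_add_left_eq)
    then show "u \<in> shift ` I"
      by blast
  qed
qed

lemma MAA_inj_right:
  assumes "0 \<le> k" "k < D" "0 \<le> k'" "k' < D" "MAA i k = MAA i k'"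
  shows "k = k'"
proof (cases "h \<le> (k - i) mod D \<and> (k - i) mod D < h + d")
  case True
  then have band': "h \<le> (k' - i) mod D \<and> (k' - i) mod D < h + d"
    and "(i + k) mod d = (i + k') mod d"
    using assms(5) unfolding MAA_def by (auto split: if_splits)
  then have "(i + k - 2 * i) mod d = (i + k' - 2 * i) mod d"
    by (intro mod_diff_cong) auto
  then have "(k - i) mod D mod d = (k' - i) mod D mod d"
    using d_dvd_D by (simp add: mod_mod_cancel)
  then have "(k - i) mod D = (k' - i) mod D"
    by (rule int_eq_if_mod_eq) (use True band' in auto)
  then have "k - i = k' - i"
    by (rule int_eq_if_mod_eq) (use assms(1-4) in auto)
  then show ?thesis by simp
next
  case False
  then have "(i + k + h + 1) mod D = (i + k' + h + 1) mod D"
    using assms(5) unfolding MAA_def by (auto split: if_splits)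
  then have "i + k + h + 1 = i + k' + h + 1"
    by (rule int_eq_if_mod_eq) (use assms(1-4) in auto)
  then show ?thesis by simp
qed

lemma MAA_neq_MAB: "MAA i k \<noteq> MAB i j"
proof
  assume eq: "MAA i k = MAB i j"
  define c where "c = (k - i) mod D"
  define t where "t = (i - j) mod d"
  have c: "0 \<le> c" "c < D" and t: "0 \<le> t" "t < d"
    unfolding c_def t_def using d_pos d_le_D by auto
  have out: "\<not> (h \<le> c \<and> c < h + d)" and "(i + k + h + 1) mod D = (2 * i - t) mod D"
    using eq unfolding MAA_def MAB_def c_def t_def by (auto split: if_splits)
  then have "D dvd (i + k + h + 1) - (2 * i - t)"
    by (simp only: mod_eq_dvd_iff)
  moreover have "D dvd c - (k - i)"
    unfolding c_def by (simp only: mod_eq_dvd_iff[symmetric] mod_mod_trivial)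
  ultimately have "D dvd ((i + k + h + 1) - (2 * i - t)) + (c - (k - i))"
    by (rule dvd_add)
  then have D_dvd: "D dvd c + h + 1 + t"
    by (simp add: algebra_simps)
  show False
  proof (cases "c < h")
    case True
    then show False
      using zdvd_abs_less_imp_zero[OF D_dvd] c t D_eq h_nonneg by linarith
  next
    case False
    have "D dvd (c + h + 1 + t) - D"
      using D_dvd by simp
    then show False
      using zdvd_abs_less_imp_zero[of D "c + h + 1 + t - D"] False out c t D_eq h_nonneg by linarith
  qed
qed

lemma MAB_inj_right:
  assumes "0 \<le> j" "j < d" "0 \<le> j'" "j' < d" "MAB i j = MAB i j'"
  shows "j = j'"
proof -
  have "(2 * i - (i - j) mod d) mod D = (2 * i - (i - j') mod d) mod D"
    using assms(5) unfolding MAB_def by simp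
  moreover have "\<bar>(2 * i - (i - j) mod d) - (2 * i - (i - j') mod d)\<bar> < D"
    using d_pos d_le_D pos_mod_bound[of d "i - j"] pos_mod_bound[of d "i - j'"]
      pos_mod_sign[of d "i - j"] pos_mod_sign[of d "i - j'"] by linarith
  ultimately have "2 * i - (i - j) mod d = 2 * i - (i - j') mod d"
    by (rule int_eq_if_mod_eq)
  then have "(i - j) mod d = (i - j') mod d"
    by simp
  then have "i - j = i - j'"
    by (rule int_eq_if_mod_eq) (use assms(1-4) in auto)
  then show ?thesis by simp
qed

lemma MBA_inj_right:
  assumes "0 \<le> i" "i < D" "0 \<le> i'" "i' < D" "MBA j i = MBA j i'"
  shows "i = i'"
proof -
  define t where "t = (i + 1 - j) mod d"
  define t' where "t' = (i' + 1 - j) mod d"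
  have t: "0 \<le> t" "t < d" "0 \<le> t'" "t' < d"
    unfolding t_def t'_def using d_pos by auto
  have "(2 * i + 1 - t) mod D = (2 * i' + 1 - t') mod D"
    using assms(5) unfolding MBA_def t_def t'_def by simp
  then have D_dvd: "D dvd 2 * (i - i') - (t - t')"
    by (simp add: mod_eq_dvd_iff algebra_simps)
  then have "d dvd 2 * (i - i') - (t - t')"
    using d_dvd_D dvd_trans by blast
  moreover have "d dvd (t - t') - (i - i')"
  proof -
    have "d dvd t - (i + 1 - j)" "d dvd t' - (i' + 1 - j)"
      unfolding t_def t'_def by (simp_all only: mod_eq_dvd_iff[symmetric] mod_mod_trivial)
    then have "d dvd (t - (i + 1 - j)) - (t' - (i' + 1 - j))"
      by (rule dvd_diff)
    then show ?thesis
      by (simp add: algebra_simps)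
  qed
  ultimately have "d dvd (2 * (i - i') - (t - t')) + ((t - t') - (i - i'))"
    by (rule dvd_add)
  then have d_dvd: "d dvd i - i'"
    by simp
  then have "d dvd ((t - t') - (i - i')) + (i - i')"
    using \<open>d dvd (t - t') - (i - i')\<close> by (rule dvd_add[rotated])
  then have "d dvd t - t'"
    by simp
  then have "t = t'"
    using zdvd_abs_less_imp_zero[of d "t - t'"] t by linarith
  then have "d * q dvd 2 * (i - i')"
    using D_dvd unfolding D_def by simp
  then have "D dvd i - i'"
    using dvd_if_dvd_double_odd[OF odd_q _ d_dvd] unfolding D_def by blast
  then show ?thesis
    using zdvd_abs_less_imp_zero[of D "i - i'"] assms(1-4) by linarith
qed

lemma MBB_inj_right:
  assumes "0 \<le> j'" "j' < d" "0 \<le> j''" "j'' < d" "MBB j j' = MBB j j''"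
  shows "j' = j''"
proof -
  have "(j + j') mod d = (j + j'') mod d"
    using assms(5) unfolding MBB_def by simp
  then have "j + j' = j + j''"
    by (rule int_eq_if_mod_eq) (use assms(1-4) in auto)
  then show ?thesis by simp
qed

lemma table_simps [simp]:
  "table (True, i) (True, k) = MAA i k" "table (True, i) (False, j) = MAB i j"
  "table (False, j) (True, i) = MBA j i" "table (False, j) (False, j') = MBB j j'"
  unfolding table_def by simp_all

lemma inj_row: "u \<in> I \<Longrightarrow> inj_on (table u) I"
proof (rule inj_onI)
  fix v v' assume "u \<in> I" "v \<in> I" "v' \<in> I" and eq: "table u v = table u v'"
  obtain a i b k b' k' where uv: "u = (a, i)" "v = (b, k)" "v' = (b', k')"
    by (metis prod.exhaust)
  have ranges: "0 \<le> k" "k < (if b then D else d)" "0 \<le> k'" "k' < (if b' then D else d)"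
    using \<open>v \<in> I\<close> \<open>v' \<in> I\<close> uv by (auto simp: mem_I)
  show "v = v'"
  proof (cases a; cases b; cases b')
    assume "a" "b" "b'"
    then show ?thesis using MAA_inj_right[of k k' i] eq ranges uv by simp
  next
    assume "a" "b" "\<not> b'"
    then show ?thesis using MAA_neq_MAB[of i k k'] eq uv by simp
  next
    assume "a" "\<not> b" "b'"
    then show ?thesis using MAA_neq_MAB[of i k' k] eq uv by simp
  next
    assume "a" "\<not> b" "\<not> b'"
    then show ?thesis using MAB_inj_right[of k k' i] eq ranges uv by simp
  next
    assume "\<not> a" "b" "b'"
    then show ?thesis using MBA_inj_right[of k k' i] eq ranges uv by simp
  next
    assume "\<not> a" "b" "\<not> b'"
    then show ?thesis using eq uv by (simp add: MBA_def MBB_def)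
  next
    assume "\<not> a" "\<not> b" "b'"
    then show ?thesis using eq uv by (simp add: MBA_def MBB_def)
  next
    assume "\<not> a" "\<not> b" "\<not> b'"
    then show ?thesis using MBB_inj_right[of k k' i] eq ranges uv by simp
  qed
qed

lemma MAA_shift: "MAA ((k + 1) mod D) i = shift (MAA i k)"
proof -
  define c where "c = (k - i) mod D"
  have c: "0 \<le> c" "c < D"
    unfolding c_def using d_pos d_le_D by auto
  have "(i - (k + 1) mod D) mod D = (i - (k + 1)) mod D"
    by (simp add: mod_diff_right_eq)
  also have "\<dots> = (D - 1 - c) mod D"
  proof -
    have "D dvd c - (k - i)"
      unfolding c_def by (simp only: mod_eq_dvd_iff[symmetric] mod_mod_trivial)
    then show ?thesis
      by (simp add: mod_eq_dvd_iff algebra_simps)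
  qed
  also have "\<dots> = D - 1 - c"
    using c by simp
  finally have c': "(i - (k + 1) mod D) mod D = D - 1 - c" .
  have "(h \<le> D - 1 - c \<and> D - 1 - c < h + d) \<longleftrightarrow> (h \<le> c \<and> c < h + d)"
    using D_eq by linarith
  then have MAA_shifted: "MAA ((k + 1) mod D) i = (if h \<le> c \<and> c < h + d
      then (False, ((k + 1) mod D + i) mod d) else (True, ((k + 1) mod D + i + h + 1) mod D))"
    unfolding MAA_def c' by simp
  have MAA_ik: "MAA i k = (if h \<le> c \<and> c < h + d
      then (False, (i + k) mod d) else (True, (i + k + h + 1) mod D))"
    unfolding MAA_def c_def by simp
  show ?thesis
  proof (cases "h \<le> c \<and> c < h + d")
    case True
    have "((k + 1) mod D + i) mod d = ((k + 1) mod D mod d + i) mod d"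
      by (simp add: mod_add_left_eq)
    also have "\<dots> = ((i + k) mod d + 1) mod d"
      using d_dvd_D by (simp add: mod_mod_cancel mod_add_left_eq mod_add_right_eq algebra_simps)
    finally show ?thesis
      using True unfolding MAA_shifted MAA_ik shift_def by simp
  next
    case False
    have "((k + 1) mod D + i + h + 1) mod D = ((k + 1) mod D + (i + h + 1)) mod D"
      by (simp add: algebra_simps)
    also have "\<dots> = (k + 1 + (i + h + 1)) mod D"
      by (simp add: mod_add_left_eq)
    also have "\<dots> = ((i + k + h + 1) mod D + 1) mod D"
      by (simp add: mod_add_left_eq mod_add_right_eq algebra_simps)
    finally show ?thesis
      using False unfolding MAA_shifted MAA_ik shift_def by auto
  qed
qed

lemma MAB_shift: "MBA ((j + 1) mod d) i = shift (MAB i j)"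
proof -
  have "(i + 1 - (j + 1) mod d) mod d = (i - j) mod d"
    by (simp add: mod_diff_right_eq)
  moreover have "(2 * i + 1 - (i - j) mod d) mod D = ((2 * i - (i - j) mod d) mod D + 1) mod D"
    by (simp add: mod_add_left_eq mod_add_right_eq algebra_simps)
  ultimately show ?thesis
    unfolding MBA_def MAB_def shift_def by simp
qed

lemma MBA_shift: "MAB ((i + 1) mod D) j = shift (MBA j i)"
proof -
  have "((i + 1) mod D - j) mod d = ((i + 1) mod D mod d - j) mod d"
    by (simp add: mod_diff_left_eq)
  also have "\<dots> = (i + 1 - j) mod d"
    using d_dvd_D by (simp add: mod_mod_cancel mod_diff_left_eq)
  finally have t: "((i + 1) mod D - j) mod d = (i + 1 - j) mod d" .
  have "(2 * ((i + 1) mod D) - t) mod D = ((2 * ((i + 1) mod D)) mod D - t) mod D" for t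
    by (simp add: mod_diff_left_eq)
  also have "\<dots> t = (2 * (i + 1) - t) mod D" for t
    by (simp add: mod_mult_right_eq mod_diff_left_eq)
  also have "\<dots> t = ((2 * i + 1 - t) mod D + 1) mod D" for t
    by (simp add: mod_add_left_eq mod_add_right_eq algebra_simps)
  finally show ?thesis
    unfolding MBA_def MAB_def shift_def using t by simp
qed

lemma MBB_shift: "MBB ((j' + 1) mod d) j = shift (MBB j j')"
proof -
  have "((j' + 1) mod d + j) mod d = ((j + j') mod d + 1) mod d"
    by (simp add: mod_add_left_eq mod_add_right_eq algebra_simps)
  then show ?thesis
    unfolding MBB_def shift_def by simp
qed

lemma table_shift: "table (shift v) u = shift (table u v)"
proof -
  obtain a i b k where "u = (a, i)" "v = (b, k)"
    by (metis prod.exhaust)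
  then show ?thesis
    using MAA_shift MAB_shift MBA_shift MBB_shift
    by (cases a; cases b) (simp_all add: shift_def)
qed

end

context two_cycle_permutation
begin

definition cycle_coord :: "nat \<Rightarrow> nat \<Rightarrow> bool \<times> int \<Rightarrow> nat" where
  "cycle_coord a b u = (\<beta> ^^ nat (snd u)) (if fst u then a else b)"

lemma bij_betw_cycle_coord:
  assumes "a \<in> A" "b \<in> B" "F = {}"
  shows "bij_betw (cycle_coord a b) ({True} \<times> {0..<int d1} \<union> {False} \<times> {0..<int d2}) {1..n}"
proof -
  have nat_snd: "bij_betw (\<lambda>u. nat (snd u)) ({c} \<times> {0..<int m}) {0..<m}" for c m
    by (rule bij_betwI[where g = "\<lambda>i. (c, int i)"]) auto
  have "bij_betw ((\<lambda>i. (\<beta> ^^ i) a) \<circ> (\<lambda>u. nat (snd u))) ({True} \<times> {0..<int d1}) A"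
    using bij_betw_trans[OF nat_snd bij_betw_funpow_cyclic_on[OF permutation cyclic_A assms(1)]]
      card_A by simp
  then have on_A: "bij_betw (cycle_coord a b) ({True} \<times> {0..<int d1}) A"
    by (rule bij_betw_cong[THEN iffD1, rotated]) (auto simp: cycle_coord_def)
  have "bij_betw ((\<lambda>i. (\<beta> ^^ i) b) \<circ> (\<lambda>u. nat (snd u))) ({False} \<times> {0..<int d2}) B"
    using bij_betw_trans[OF nat_snd bij_betw_funpow_cyclic_on[OF permutation cyclic_B assms(2)]]
      card_B by simp
  then have on_B: "bij_betw (cycle_coord a b) ({False} \<times> {0..<int d2}) B"
    by (rule bij_betw_cong[THEN iffD1, rotated]) (auto simp: cycle_coord_def)
  have "{1..n} = A \<union> B"
    using assms(3) A_subset B_subset unfolding F_def by blast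
  then show ?thesis
    using bij_betw_combine[OF on_A on_B] disjoint by simp
qed

lemma cycle_coord_succ:
  assumes "a \<in> A" "b \<in> B" "0 \<le> i"
  shows "cycle_coord a b (c, (i + 1) mod int (if c then d1 else d2)) = \<beta> (cycle_coord a b (c, i))"
proof -
  have period: "(\<beta> ^^ (if c then d1 else d2)) (if c then a else b) = (if c then a else b)"
    using funpow_fixes_A_iff[OF assms(1)] funpow_fixes_B_iff[OF assms(2)] by simp
  have "nat ((i + 1) mod int (if c then d1 else d2)) = Suc (nat i) mod (if c then d1 else d2)"
    using assms(3) by (simp add: nat_mod_distrib nat_add_distrib)
  then show ?thesis
    unfolding cycle_coord_def using funpow_mod_eq[OF period, of "Suc (nat i)"] by simp
qed

lemma in_Par12_if_odd_multiple:
  assumes "d2 dvd d1" "odd (d1 div d2)" "F = {}"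
  shows "in_Par12 n id \<beta> \<beta>"
proof -
  define q where "q = d1 div d2"
  have d1_eq: "d1 = d2 * q"
    using assms(1) unfolding q_def by simp
  then have "0 < q"
    using d1_pos by simp
  interpret T: two_cycle_table "int d2" "int q"
    using d2_pos \<open>0 < q\<close> assms(2) unfolding q_def by unfold_locales auto
  have D_eq: "T.D = int d1"
    unfolding T.D_def d1_eq by simp
  have I_eq: "T.I = {True} \<times> {0..<int d1} \<union> {False} \<times> {0..<int d2}"
    unfolding T.I_def D_eq by simp
  obtain a b where "a \<in> A" "b \<in> B"
    using A_nonempty B_nonempty by blast
  then have "bij_betw (cycle_coord a b) T.I {1..n}"
    unfolding I_eq using bij_betw_cycle_coord assms(3) by blast
  moreover have "cycle_coord a b (T.shift u) = \<beta> (cycle_coord a b u)" if "u \<in> T.I" for u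
  proof -
    obtain c i where "u = (c, i)"
      by fastforce
    then show ?thesis
      using cycle_coord_succ[OF \<open>a \<in> A\<close> \<open>b \<in> B\<close>, of i c] that
      unfolding T.shift_def D_eq T.mem_I by (cases c) auto
  qed
  ultimately show ?thesis
    using permutes T.shift_onto T.table_closed T.table_shift T.inj_row
    by (intro in_Par12_of_table[where E = "cycle_coord a b" and s = T.shift and M = T.table]) auto
qed

end

theorem theorem4p15:
  fixes d1 d2 f n :: nat and \<beta> :: "nat \<Rightarrow> nat"
  assumes "d1 > d2" and "d2 > 1"
    and "n = d1 + d2 + f"
    and "cycle_structure_2 n \<beta> d1 d2 f"
  shows "in_Par12 n id \<beta> \<beta> \<longleftrightarrow> (d2 dvd d1 \<and> odd (d1 div d2) \<and> f = 0)"
proof -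
  obtain A B where cycles: "two_cycle_permutation n \<beta> d1 d2 A B"
    and card_F: "card ({1..n} - (A \<union> B)) = f"
    using assms(4) unfolding cycle_structure_2_def two_cycle_permutation_def by blast
  interpret two_cycle_permutation n \<beta> d1 d2 A B
    by (fact cycles)
  have F_empty_iff: "F = {} \<longleftrightarrow> f = 0"
    using card_F card_0_eq[of F] unfolding F_def by auto
  show ?thesis
  proof
    assume "in_Par12 n id \<beta> \<beta>"
    then obtain L where "latin_square n L" "autoparatopism12 n id \<beta> \<beta> L"
      unfolding in_Par12_def by blast
    then interpret two_cycle_autoparatopism n \<beta> d1 d2 A B L
      using \<open>d1 > d2\<close> by unfold_locales
    show "d2 dvd d1 \<and> odd (d1 div d2) \<and> f = 0"
      using d2_dvd_d1 odd_d1_div_d2 no_fixpoints F_empty_iff by blast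
  next
    assume "d2 dvd d1 \<and> odd (d1 div d2) \<and> f = 0"
    then show "in_Par12 n id \<beta> \<beta>"
      using in_Par12_if_odd_multiple F_empty_iff by blast
  qed
qed

end
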